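(* Let $(M,\tau)$ be a tracial von Neumann algebra, $p\geq2$, $\xi_1,\dots,\xi_p\in M$ self-adjoint with $\|\xi_i\|_\infty\leq1$, and $\alpha_1,\dots,\alpha_p\in\mathbb R$. Let $\delta\in(0,1)$ and $\varepsilon\in(0,\frac{\delta^2}{p-1})$. Assume $\|\xi_i\|_2\geq\delta$ for every $1\leq i\leq p$, and $|\langle\xi_i,\xi_j\rangle|\leq\varepsilon$ for every $1\leq i<j\leq p$. Then there exists $h\in M$ with $h=h^*$, $\|h\|_\infty\leq\frac{\sum_{j=1}^p|\alpha_j|}{\delta^2-(p-1)\varepsilon}$ and $\tau(h\xi_i)=\alpha_i$ for every $1\leq i\leq p$.
   Context: $\langle a,b\rangle=\tau(b^*a)$ and $\|a\|_2=\tau(a^*a)^{1/2}$. *)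

theory Defs
  imports "HOL-Analysis.Analysis"
begin

text \<open>An abstract tracial von Neumann algebra (M, tau), presented as a unital complex
C*-algebra (all of the carrier type) equipped with a faithful tracial state tau,
which is monotone complete and for which tau is normal.  By Kadison's theorem a
monotone complete C*-algebra with a separating family of normal states (here the
faithful normal state tau) is a W*-algebra, i.e. a von Neumann algebra.\<close>

record 'a tvna =
  add :: "'a \<Rightarrow> 'a \<Rightarrow> 'a"
  zero :: 'a
  neg :: "'a \<Rightarrow> 'a"
  mul :: "'a \<Rightarrow> 'a \<Rightarrow> 'a"
  one :: 'a
  smul :: "complex \<Rightarrow> 'a \<Rightarrow> 'a"
  star :: "'a \<Rightarrow> 'a"
  nrm :: "'a \<Rightarrow> real"
  tr :: "'a \<Rightarrow> complex"

definition self_adj :: "'a tvna \<Rightarrow> 'a \<Rightarrow> bool" where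
  "self_adj T x \<longleftrightarrow> star T x = x"

definition positive :: "'a tvna \<Rightarrow> 'a \<Rightarrow> bool" where
  "positive T x \<longleftrightarrow> (\<exists>y. x = mul T (star T y) y)"

definition op_le :: "'a tvna \<Rightarrow> 'a \<Rightarrow> 'a \<Rightarrow> bool" where
  "op_le T x y \<longleftrightarrow> positive T (add T y (neg T x))"

definition tinner :: "'a tvna \<Rightarrow> 'a \<Rightarrow> 'a \<Rightarrow> complex" where
  "tinner T a b = tr T (mul T (star T b) a)"

definition norm2 :: "'a tvna \<Rightarrow> 'a \<Rightarrow> real" where
  "norm2 T a = sqrt (Re (tr T (mul T (star T a) a)))"

definition tracial_vna :: "'a tvna \<Rightarrow> bool" where
  "tracial_vna T \<longleftrightarrow>
    \<comment> \<open>complex vector space\<close>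
    (\<forall>x y z. add T (add T x y) z = add T x (add T y z)) \<and>
    (\<forall>x y. add T x y = add T y x) \<and>
    (\<forall>x. add T (zero T) x = x) \<and>
    (\<forall>x. add T x (neg T x) = zero T) \<and>
    (\<forall>a x y. smul T a (add T x y) = add T (smul T a x) (smul T a y)) \<and>
    (\<forall>a b x. smul T (a + b) x = add T (smul T a x) (smul T b x)) \<and>
    (\<forall>a b x. smul T a (smul T b x) = smul T (a * b) x) \<and>
    (\<forall>x. smul T 1 x = x) \<and>
    \<comment> \<open>unital associative algebra\<close>
    (\<forall>x y z. mul T (mul T x y) z = mul T x (mul T y z)) \<and>
    (\<forall>x y z. mul T x (add T y z) = add T (mul T x y) (mul T x z)) \<and>
    (\<forall>x y z. mul T (add T x y) z = add T (mul T x z) (mul T y z)) \<and>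
    (\<forall>a x y. mul T (smul T a x) y = smul T a (mul T x y)) \<and>
    (\<forall>a x y. mul T x (smul T a y) = smul T a (mul T x y)) \<and>
    (\<forall>x. mul T (one T) x = x \<and> mul T x (one T) = x) \<and>
    \<comment> \<open>involution\<close>
    (\<forall>x. star T (star T x) = x) \<and>
    (\<forall>x y. star T (add T x y) = add T (star T x) (star T y)) \<and>
    (\<forall>a x. star T (smul T a x) = smul T (cnj a) (star T x)) \<and>
    (\<forall>x y. star T (mul T x y) = mul T (star T y) (star T x)) \<and>
    \<comment> \<open>C*-norm, complete\<close>
    (\<forall>x. 0 \<le> nrm T x) \<and>
    (\<forall>x. nrm T x = 0 \<longleftrightarrow> x = zero T) \<and>
    (\<forall>x y. nrm T (add T x y) \<le> nrm T x + nrm T y) \<and>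
    (\<forall>a x. nrm T (smul T a x) = cmod a * nrm T x) \<and>
    (\<forall>x y. nrm T (mul T x y) \<le> nrm T x * nrm T y) \<and>
    (\<forall>x. nrm T (mul T (star T x) x) = (nrm T x)\<^sup>2) \<and>
    (\<forall>f :: nat \<Rightarrow> 'a.
        (\<forall>e>0. \<exists>N. \<forall>m n. N \<le> m \<longrightarrow> N \<le> n \<longrightarrow> nrm T (add T (f m) (neg T (f n))) < e)
        \<longrightarrow> (\<exists>l. (\<lambda>n. nrm T (add T (f n) (neg T l))) \<longlonglongrightarrow> 0)) \<and>
    \<comment> \<open>faithful tracial state\<close>
    (\<forall>x y. tr T (add T x y) = tr T x + tr T y) \<and>
    (\<forall>a x. tr T (smul T a x) = a * tr T x) \<and>
    tr T (one T) = 1 \<and>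
    (\<forall>x y. tr T (mul T x y) = tr T (mul T y x)) \<and>
    (\<forall>x. Im (tr T (mul T (star T x) x)) = 0 \<and> 0 \<le> Re (tr T (mul T (star T x) x))) \<and>
    (\<forall>x. tr T (mul T (star T x) x) = 0 \<longrightarrow> x = zero T) \<and>
    \<comment> \<open>monotone completeness, and normality of the trace\<close>
    (\<forall>D. D \<noteq> {} \<and> (\<forall>x\<in>D. self_adj T x) \<and>
         (\<forall>x\<in>D. \<forall>y\<in>D. \<exists>z\<in>D. op_le T x z \<and> op_le T y z) \<and>
         (\<exists>C. \<forall>x\<in>D. nrm T x \<le> C)
       \<longrightarrow> (\<exists>s. self_adj T s \<and> (\<forall>x\<in>D. op_le T x s) \<and>
               (\<forall>u. self_adj T u \<and> (\<forall>x\<in>D. op_le T x u) \<longrightarrow> op_le T s u) \<and>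
               Re (tr T s) = (SUP x\<in>D. Re (tr T x))))"

end

theory Submission
  imports Defs "Jordan_Normal_Form.Determinant"
begin

text \<open>Look for \<open>h\<close> as a real combination \<open>\<Sum>j. c\<^sub>j \<xi>\<^sub>j\<close>. Then \<open>\<tau>(h \<xi>\<^sub>i) = \<Sum>j. G\<^sub>i\<^sub>j c\<^sub>j\<close>,
where \<open>G\<^sub>i\<^sub>j = \<tau>(\<xi>\<^sub>j \<xi>\<^sub>i)\<close> is the Gram matrix of the \<open>\<xi>\<^sub>j\<close>, which is real because the \<open>\<xi>\<^sub>j\<close> are
self-adjoint. Its diagonal entries are at least \<open>\<delta>\<^sup>2\<close> and its off-diagonal entries at most \<open>\<epsilon>\<close>
in absolute value, so \<open>\<parallel>G c\<parallel>\<^sub>1 \<ge> (\<delta>\<^sup>2 - (p - 1) \<epsilon>) \<parallel>c\<parallel>\<^sub>1\<close>. Hence \<open>G\<close> is injective, the system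
\<open>G c = \<alpha>\<close> has a solution, and \<open>\<parallel>h\<parallel>\<^sub>\<infinity> \<le> \<parallel>c\<parallel>\<^sub>1 \<le> \<parallel>\<alpha>\<parallel>\<^sub>1 / (\<delta>\<^sup>2 - (p - 1) \<epsilon>)\<close>.\<close>

lemma square_system_solvable_if_injective:
  fixes g :: "nat \<Rightarrow> nat \<Rightarrow> real"
  assumes inj: "\<And>c. \<forall>i<n. (\<Sum>j<n. g i j * c j) = 0 \<Longrightarrow> \<forall>j<n. c j = 0"
  shows "\<exists>c. \<forall>i<n. (\<Sum>j<n. g i j * c j) = b i"
proof -
  define A where "A = mat n n (\<lambda>(i, j). g i j)"
  have A: "A \<in> carrier_mat n n"
    unfolding A_def by simp
  have mult_vec: "(A *\<^sub>v v) $ i = (\<Sum>j<n. g i j * v $ j)" if "v \<in> carrier_vec n" "i < n" for v i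
    using that unfolding A_def by (auto simp: scalar_prod_def lessThan_atLeast0 intro!: sum.cong)
  have "det A \<noteq> 0"
  proof
    assume "det A = 0"
    then obtain v where v: "v \<in> carrier_vec n" "v \<noteq> 0\<^sub>v n" "A *\<^sub>v v = 0\<^sub>v n"
      using det_0_iff_vec_prod_zero[OF A] by auto
    have "\<forall>i<n. (\<Sum>j<n. g i j * v $ j) = 0"
      using mult_vec[OF v(1)] v(3) by (metis index_zero_vec(1))
    then have "v = 0\<^sub>v n"
      using inj v(1) by (intro eq_vecI) auto
    with v(2) show False ..
  qed
  then have "A \<in> Units (ring_mat TYPE(real) n ())"
    by (rule det_non_zero_imp_unit[OF A])
  then obtain B where B: "B \<in> carrier_mat n n" "A * B = 1\<^sub>m n"
    unfolding Units_def by (auto simp: ring_mat_simps)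
  have "A *\<^sub>v (B *\<^sub>v vec n b) = vec n b"
    using A B by (simp flip: assoc_mult_mat_vec)
  moreover have "B *\<^sub>v vec n b \<in> carrier_vec n"
    using B by simp
  ultimately show ?thesis
    using mult_vec by (metis index_vec)
qed

lemma square_system_solvable_if_injective_on:
  fixes g :: "'i \<Rightarrow> 'i \<Rightarrow> real"
  assumes "finite I"
    and inj: "\<And>c. \<forall>i\<in>I. (\<Sum>j\<in>I. g i j * c j) = 0 \<Longrightarrow> \<forall>j\<in>I. c j = 0"
  shows "\<exists>c. \<forall>i\<in>I. (\<Sum>j\<in>I. g i j * c j) = b i"
proof -
  obtain e where e: "bij_betw e {..<card I} I"
    using ex_bij_betw_nat_finite[OF \<open>finite I\<close>] by (auto simp: lessThan_atLeast0)
  define e' where "e' = inv_into {..<card I} e"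
  have e'_e: "e' (e k) = k" if "k < card I" for k
    using e that unfolding e'_def by (simp add: bij_betw_def inv_into_f_f)
  have e_e': "e (e' i) = i" "e' i < card I" if "i \<in> I" for i
    using that bij_betw_inv_into_right[OF e] bij_betw_apply[OF bij_betw_inv_into[OF e]]
    unfolding e'_def by auto
  have reindex: "(\<Sum>j\<in>I. g i j * c (e' j)) = (\<Sum>l<card I. g i (e l) * c l)" for i c
    using sum.reindex_bij_betw[OF e, of "\<lambda>j. g i j * c (e' j)"] by (simp add: e'_e)
  have "\<exists>c. \<forall>k<card I. (\<Sum>l<card I. g (e k) (e l) * c l) = b (e k)"
  proof (rule square_system_solvable_if_injective)
    fix c :: "nat \<Rightarrow> real"
    assume "\<forall>k<card I. (\<Sum>l<card I. g (e k) (e l) * c l) = 0"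
    then have "\<forall>i\<in>I. (\<Sum>j\<in>I. g i j * c (e' j)) = 0"
      by (metis reindex e_e')
    then show "\<forall>l<card I. c l = 0"
      using inj e bij_betw_apply e'_e by fastforce
  qed
  then obtain c where "\<forall>k<card I. (\<Sum>l<card I. g (e k) (e l) * c l) = b (e k)" ..
  then have "\<forall>i\<in>I. (\<Sum>j\<in>I. g i j * c (e' j)) = b i"
    by (metis reindex e_e')
  then show ?thesis
    by (intro exI[of _ "\<lambda>j. c (e' j)"])
qed

lemma diag_dominant_l1_bound:
  fixes g :: "'i \<Rightarrow> 'i \<Rightarrow> real"
  assumes "finite I"
    and diag: "\<forall>i\<in>I. d \<le> g i i"
    and off_diag: "\<forall>i\<in>I. \<forall>j\<in>I. i \<noteq> j \<longrightarrow> \<bar>g i j\<bar> \<le> e"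
  shows "(d - (real (card I) - 1) * e) * (\<Sum>j\<in>I. \<bar>c j\<bar>) \<le> (\<Sum>i\<in>I. \<bar>\<Sum>j\<in>I. g i j * c j\<bar>)"
proof -
  define S where "S = (\<Sum>j\<in>I. \<bar>c j\<bar>)"
  have row: "d * \<bar>c i\<bar> - e * (S - \<bar>c i\<bar>) \<le> \<bar>\<Sum>j\<in>I. g i j * c j\<bar>" if "i \<in> I" for i
  proof -
    have "d \<le> \<bar>g i i\<bar>"
      using diag \<open>i \<in> I\<close> abs_ge_self order_trans by blast
    have "\<bar>\<Sum>j\<in>I - {i}. g i j * c j\<bar> \<le> (\<Sum>j\<in>I - {i}. \<bar>g i j\<bar> * \<bar>c j\<bar>)"
      using sum_abs[of "\<lambda>j. g i j * c j" "I - {i}"] by (simp add: abs_mult)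
    also have "\<dots> \<le> (\<Sum>j\<in>I - {i}. e * \<bar>c j\<bar>)"
      using off_diag \<open>i \<in> I\<close> by (intro sum_mono mult_right_mono) auto
    also have "\<dots> = e * (S - \<bar>c i\<bar>)"
      using \<open>finite I\<close> \<open>i \<in> I\<close> by (simp add: S_def sum_diff1 flip: sum_distrib_left)
    finally have "\<bar>\<Sum>j\<in>I - {i}. g i j * c j\<bar> \<le> e * (S - \<bar>c i\<bar>)" .
    moreover have "d * \<bar>c i\<bar> \<le> \<bar>g i i * c i\<bar>"
      using \<open>d \<le> \<bar>g i i\<bar>\<close> by (simp add: abs_mult mult_right_mono)
    moreover have "(\<Sum>j\<in>I. g i j * c j) = g i i * c i + (\<Sum>j\<in>I - {i}. g i j * c j)"
      using \<open>finite I\<close> \<open>i \<in> I\<close> by (simp add: sum.remove)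
    ultimately show ?thesis
      by linarith
  qed
  have "(d - (real (card I) - 1) * e) * S = (\<Sum>i\<in>I. d * \<bar>c i\<bar> - e * (S - \<bar>c i\<bar>))"
    by (simp add: S_def sum_subtractf sum_distrib_left algebra_simps)
  also have "\<dots> \<le> (\<Sum>i\<in>I. \<bar>\<Sum>j\<in>I. g i j * c j\<bar>)"
    using row by (rule sum_mono)
  finally show ?thesis
    unfolding S_def .
qed

lemma diag_dominant_system_solvable:
  fixes g :: "'i \<Rightarrow> 'i \<Rightarrow> real"
  assumes "finite I"
    and "\<forall>i\<in>I. d \<le> g i i"
    and "\<forall>i\<in>I. \<forall>j\<in>I. i \<noteq> j \<longrightarrow> \<bar>g i j\<bar> \<le> e"
    and pos: "0 < d - (real (card I) - 1) * e"
  shows "\<exists>c. (\<forall>i\<in>I. (\<Sum>j\<in>I. g i j * c j) = b i) \<and>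
             (\<Sum>j\<in>I. \<bar>c j\<bar>) \<le> (\<Sum>i\<in>I. \<bar>b i\<bar>) / (d - (real (card I) - 1) * e)"
proof -
  note bound = diag_dominant_l1_bound[OF assms(1-3)]
  have "\<exists>c. \<forall>i\<in>I. (\<Sum>j\<in>I. g i j * c j) = b i"
  proof (rule square_system_solvable_if_injective_on[OF \<open>finite I\<close>])
    fix c :: "'i \<Rightarrow> real"
    assume "\<forall>i\<in>I. (\<Sum>j\<in>I. g i j * c j) = 0"
    then have "(d - (real (card I) - 1) * e) * (\<Sum>j\<in>I. \<bar>c j\<bar>) \<le> 0"
      using bound[of c] by simp
    then have "(\<Sum>j\<in>I. \<bar>c j\<bar>) = 0"
      using pos by (simp add: antisym mult_le_0_iff sum_nonneg)
    then show "\<forall>j\<in>I. c j = 0"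
      using \<open>finite I\<close> by (simp add: sum_nonneg_eq_0_iff)
  qed
  then obtain c where c: "\<forall>i\<in>I. (\<Sum>j\<in>I. g i j * c j) = b i" ..
  then have "(d - (real (card I) - 1) * e) * (\<Sum>j\<in>I. \<bar>c j\<bar>) \<le> (\<Sum>i\<in>I. \<bar>b i\<bar>)"
    using bound[of c] by simp
  with c pos show ?thesis
    by (auto simp: field_simps)
qed

context
  fixes T :: "'a tvna"
  assumes tvna: "tracial_vna T"
begin

text \<open>The record field \<open>add\<close> must be written \<open>tvna.add\<close>: the bare name denotes the ring
  addition of HOL-Algebra, which comes with Jordan_Normal_Form.\<close>

lemma
  shows tvna_star_add [rule_format]: "\<forall>x y. star T (tvna.add T x y) = tvna.add T (star T x) (star T y)"
    and tvna_star_smul [rule_format]: "\<forall>a x. star T (smul T a x) = smul T (cnj a) (star T x)"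
    and tvna_mul_add [rule_format]: "\<forall>x y z. mul T x (tvna.add T y z) = tvna.add T (mul T x y) (mul T x z)"
    and tvna_add_mul [rule_format]: "\<forall>x y z. mul T (tvna.add T x y) z = tvna.add T (mul T x z) (mul T y z)"
    and tvna_smul_mul [rule_format]: "\<forall>a x y. mul T (smul T a x) y = smul T a (mul T x y)"
    and tvna_mul_smul [rule_format]: "\<forall>a x y. mul T x (smul T a y) = smul T a (mul T x y)"
    and tvna_nrm_add [rule_format]: "\<forall>x y. nrm T (tvna.add T x y) \<le> nrm T x + nrm T y"
    and tvna_nrm_smul [rule_format]: "\<forall>a x. nrm T (smul T a x) = cmod a * nrm T x"
    and tvna_tr_add [rule_format]: "\<forall>x y. tr T (tvna.add T x y) = tr T x + tr T y"
    and tvna_tr_smul [rule_format]: "\<forall>a x. tr T (smul T a x) = a * tr T x"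
    and tvna_tr_commute [rule_format]: "\<forall>x y. tr T (mul T x y) = tr T (mul T y x)"
    and tvna_tr_star_mul_self [rule_format]:
      "\<forall>x. Im (tr T (mul T (star T x) x)) = 0 \<and> 0 \<le> Re (tr T (mul T (star T x) x))"
  using tvna unfolding tracial_vna_def by - (elim conjE, assumption)+

lemma tinner_cnj_commute: "tinner T a b = cnj (tinner T b a)"
proof -
  have expand: "tr T (mul T (star T (tvna.add T a (smul T w b))) (tvna.add T a (smul T w b)))
      = tr T (mul T (star T a) a) + w * tinner T b a + cnj w * tinner T a b
        + (cnj w * w) * tr T (mul T (star T b) b)" for w
    by (simp add: tinner_def tvna_star_add tvna_star_smul tvna_mul_add tvna_add_mul tvna_smul_mul
        tvna_mul_smul tvna_tr_add tvna_tr_smul algebra_simps)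
  \<comment> \<open>polarization: the left-hand side is real for \<open>w = 1\<close> and \<open>w = \<i>\<close>\<close>
  have "Im (tinner T b a + tinner T a b) = 0"
    using expand[of 1] tvna_tr_star_mul_self[of a] tvna_tr_star_mul_self[of b]
      tvna_tr_star_mul_self[of "tvna.add T a (smul T 1 b)"] by simp
  moreover have "Re (tinner T b a) = Re (tinner T a b)"
    using expand[of \<i>] tvna_tr_star_mul_self[of a] tvna_tr_star_mul_self[of b]
      tvna_tr_star_mul_self[of "tvna.add T a (smul T \<i> b)"] by simp
  ultimately show ?thesis
    by (simp add: complex_eq_iff)
qed

lemma tr_mul_self_adj_real:
  assumes "self_adj T a" and "self_adj T b"
  shows "tr T (mul T a b) = complex_of_real (Re (tr T (mul T a b)))"
proof -
  have "tr T (mul T a b) = cnj (tr T (mul T a b))"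
    using tinner_cnj_commute[of b a] tvna_tr_commute[of b a] assms
    by (simp add: tinner_def self_adj_def)
  then have "Im (tr T (mul T a b)) = 0"
    by (simp add: complex_eq_iff)
  then show ?thesis
    by (simp add: complex_eq_iff)
qed

lemma norm2_squared: "(norm2 T a)\<^sup>2 = Re (tr T (mul T (star T a) a))"
  using tvna_tr_star_mul_self[of a] by (simp add: norm2_def)

lemma self_adj_combination_exists:
  assumes "finite I" and "I \<noteq> {}" and "\<forall>j\<in>I. self_adj T (x j)"
  shows "\<exists>h. self_adj T h \<and> nrm T h \<le> (\<Sum>j\<in>I. \<bar>c j\<bar> * nrm T (x j)) \<and>
             (\<forall>y. tr T (mul T h y) = (\<Sum>j\<in>I. complex_of_real (c j) * tr T (mul T (x j) y)))"
  using assms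
proof (induction I rule: finite_ne_induct)
  case (singleton j)
  then show ?case
    by (intro exI[of _ "smul T (c j) (x j)"])
      (simp add: self_adj_def tvna_star_smul tvna_nrm_smul tvna_smul_mul tvna_tr_smul)
next
  case (insert j I)
  then obtain h where h: "self_adj T h" "nrm T h \<le> (\<Sum>j\<in>I. \<bar>c j\<bar> * nrm T (x j))"
    "\<forall>y. tr T (mul T h y) = (\<Sum>j\<in>I. complex_of_real (c j) * tr T (mul T (x j) y))"
    by auto
  have "nrm T (tvna.add T (smul T (c j) (x j)) h) \<le> \<bar>c j\<bar> * nrm T (x j) + nrm T h"
    using tvna_nrm_add[of "smul T (c j) (x j)" h] by (simp add: tvna_nrm_smul)
  with h insert show ?case
    by (intro exI[of _ "tvna.add T (smul T (c j) (x j)) h"])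
      (simp add: self_adj_def tvna_star_add tvna_star_smul tvna_add_mul tvna_smul_mul tvna_tr_add
        tvna_tr_smul)
qed

lemma exists_self_adj_with_prescribed_traces:
  assumes "finite I" and "I \<noteq> {}"
    and x: "\<forall>i\<in>I. self_adj T (x i) \<and> nrm T (x i) \<le> 1"
    and diag: "\<forall>i\<in>I. d \<le> (norm2 T (x i))\<^sup>2"
    and off_diag: "\<forall>i\<in>I. \<forall>j\<in>I. i \<noteq> j \<longrightarrow> cmod (tinner T (x i) (x j)) \<le> e"
    and pos: "0 < d - (real (card I) - 1) * e"
  shows "\<exists>h. self_adj T h \<and> nrm T h \<le> (\<Sum>i\<in>I. \<bar>\<alpha> i\<bar>) / (d - (real (card I) - 1) * e) \<and>
             (\<forall>i\<in>I. tr T (mul T h (x i)) = complex_of_real (\<alpha> i))"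
proof -
  define g where "g i j = Re (tr T (mul T (x j) (x i)))" for i j
  have star_x: "star T (x i) = x i" if "i \<in> I" for i
    using x that by (simp add: self_adj_def)
  have g_diag: "\<forall>i\<in>I. d \<le> g i i"
    using diag by (simp add: g_def norm2_squared star_x)
  have g_off_diag: "\<forall>i\<in>I. \<forall>j\<in>I. i \<noteq> j \<longrightarrow> \<bar>g i j\<bar> \<le> e"
    using off_diag by (simp add: g_def tinner_def star_x) (meson abs_Re_le_cmod order_trans)
  obtain c where c: "\<forall>i\<in>I. (\<Sum>j\<in>I. g i j * c j) = \<alpha> i"
    and c_bound: "(\<Sum>j\<in>I. \<bar>c j\<bar>) \<le> (\<Sum>i\<in>I. \<bar>\<alpha> i\<bar>) / (d - (real (card I) - 1) * e)"
    using diag_dominant_system_solvable[OF \<open>finite I\<close> g_diag g_off_diag pos] by blast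
  obtain h where h: "self_adj T h" "nrm T h \<le> (\<Sum>j\<in>I. \<bar>c j\<bar> * nrm T (x j))"
    "\<forall>y. tr T (mul T h y) = (\<Sum>j\<in>I. complex_of_real (c j) * tr T (mul T (x j) y))"
    using self_adj_combination_exists[OF \<open>finite I\<close> \<open>I \<noteq> {}\<close>] x by blast
  have "tr T (mul T h (x i)) = complex_of_real (\<alpha> i)" if "i \<in> I" for i
  proof -
    have "tr T (mul T h (x i)) = (\<Sum>j\<in>I. complex_of_real (g i j * c j))"
      using h(3) x that tr_mul_self_adj_real by (auto simp: g_def intro!: sum.cong)
    then show ?thesis
      using c that by (simp del: of_real_mult flip: of_real_sum)
  qed
  moreover have "nrm T h \<le> (\<Sum>j\<in>I. \<bar>c j\<bar>)"
    using x by (intro order_trans[OF h(2)] sum_mono) (simp add: mult_left_le)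
  ultimately show ?thesis
    using h(1) c_bound by (blast intro: order_trans)
qed

end

theorem lemma5p3:
  fixes T :: "'a tvna" and p :: nat and xi :: "nat \<Rightarrow> 'a" and alpha :: "nat \<Rightarrow> real"
    and \<delta> \<epsilon> :: real
  assumes "tracial_vna T"
    and "p \<ge> 2"
    and "\<forall>i\<in>{1..p}. self_adj T (xi i) \<and> nrm T (xi i) \<le> 1"
    and "0 < \<delta>" and "\<delta> < 1"
    and "0 < \<epsilon>" and "\<epsilon> < \<delta>\<^sup>2 / (real p - 1)"
    and "\<forall>i\<in>{1..p}. norm2 T (xi i) \<ge> \<delta>"
    and "\<forall>i j. 1 \<le> i \<and> i < j \<and> j \<le> p \<longrightarrow> cmod (tinner T (xi i) (xi j)) \<le> \<epsilon>"
  shows "\<exists>h. self_adj T h \<and>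
           nrm T h \<le> (\<Sum>j=1..p. \<bar>alpha j\<bar>) / (\<delta>\<^sup>2 - (real p - 1) * \<epsilon>) \<and>
           (\<forall>i\<in>{1..p}. tr T (mul T h (xi i)) = complex_of_real (alpha i))"
proof -
  have diag: "\<forall>i\<in>{1..p}. \<delta>\<^sup>2 \<le> (norm2 T (xi i))\<^sup>2"
    using assms(4,8) by (simp add: power_mono)
  have off_diag: "\<forall>i\<in>{1..p}. \<forall>j\<in>{1..p}. i \<noteq> j \<longrightarrow> cmod (tinner T (xi i) (xi j)) \<le> \<epsilon>"
  proof (intro ballI impI)
    fix i j assume "i \<in> {1..p}" "j \<in> {1..p}" "i \<noteq> j"
    moreover have "cmod (tinner T (xi i) (xi j)) = cmod (tinner T (xi j) (xi i))"
      using tinner_cnj_commute[OF assms(1)] by (metis complex_mod_cnj)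
    ultimately show "cmod (tinner T (xi i) (xi j)) \<le> \<epsilon>"
      using assms(9) by (metis atLeastAtMost_iff linorder_neqE_nat)
  qed
  have "0 < \<delta>\<^sup>2 - (real p - 1) * \<epsilon>"
    using assms(2,7) by (simp add: field_simps)
  then show ?thesis
    using exists_self_adj_with_prescribed_traces[OF assms(1), of "{1..p}" xi "\<delta>\<^sup>2" \<epsilon> alpha]
      assms(2,3) diag off_diag by simp
qed

end
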